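(* Let $K$ be a field of any characteristic. Let $d_1,\ldots,d_n$ be positive integers and let $a_{i,j}$ ($1\le i\le 2$, $1\le j\le n$) be nonnegative integers such that for each $i\in\{1,2\}$ at least one of $a_{i,1},\ldots,a_{i,n}$ is nonzero. Let $A$ be the set of columns of the $n\times(n+2)$ matrix $$\begin{pmatrix} d_1 & 0 & \cdots & 0 & a_{1,1} & a_{2,1}\\ 0 & d_2 & \cdots & 0 & a_{1,2} & a_{2,2}\\ \vdots & & \ddots & & \vdots & \vdots\\ 0 & 0 & \cdots & d_n & a_{1,n} & a_{2,n}\end{pmatrix},$$ so that $V(I_A)$ is a simplicial toric variety and $I_A\subset K[x_1,\ldots,x_{n+2}]$ has height $2$. Then $2\le\mathrm{Split}_{\mathrm{rad}}(I_A)\le 3$.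
   Context: For a configuration $A=\{{\bf a}_1,\ldots,{\bf a}_N\}\subset\mathbb{Z}^n$ with $\ker_{\mathbb{Z}}(A)\cap\mathbb{N}^N=\{{\bf 0}\}$, the toric ideal $I_A$ is the kernel of $K[x_1,\ldots,x_N]\to K[t_1^{\pm1},\ldots,t_n^{\pm1}]$, $x_i\mapsto{\bf t}^{{\bf a}_i}$. $\mathrm{Split}_{\mathrm{rad}}(I_A)$ is the smallest integer $r$ such that there exist toric ideals $I_{A_1},\ldots,I_{A_r}\subset K[x_1,\ldots,x_N]$ with $I_A=\mathrm{rad}(I_{A_1}+\cdots+I_{A_r})$ and $I_{A_i}\ne I_A$ for all $i$. *)

theory Defs
  imports Main "HOL-Library.Poly_Mapping"
begin

(* Polynomials over a field 'k: finitely supported maps from monomials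
(exponent vectors nat =>0 nat) to coefficients. *)

type_synonym 'k mpoly = "(nat \<Rightarrow>\<^sub>0 nat) \<Rightarrow>\<^sub>0 'k"

definition poly_ring :: "nat \<Rightarrow> 'k::field mpoly set" where
  "poly_ring N = {p. \<forall>u \<in> Poly_Mapping.keys p. Poly_Mapping.keys u \<subseteq> {..<N}}"

(* A configuration of N vectors in Z^m: column j (j < N), row k (k < m)
entry B j k. The degree map sends the monomial x^u to the lattice point Au. *)

definition cfg_deg :: "nat \<Rightarrow> (nat \<Rightarrow> nat \<Rightarrow> int) \<Rightarrow> (nat \<Rightarrow>\<^sub>0 nat) \<Rightarrow> nat \<Rightarrow> int" where
  "cfg_deg N B u = (\<lambda>k. \<Sum>j<N. int (Poly_Mapping.lookup u j) * B j k)"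

definition pointed_cfg :: "nat \<Rightarrow> nat \<Rightarrow> (nat \<Rightarrow> nat \<Rightarrow> int) \<Rightarrow> bool" where
  "pointed_cfg N m B \<longleftrightarrow>
     (\<forall>v :: nat \<Rightarrow> nat. (\<forall>k<m. (\<Sum>j<N. int (v j) * B j k) = 0) \<longrightarrow> (\<forall>j<N. v j = 0))"

(* Toric ideal: kernel of the K-algebra map K[x_0..x_{N-1}] \<rightarrow> K[t^{\<pm>1}],
x_j \<mapsto> t^{a_j}. The image of p has coefficient at t^w equal to the sum of the
coefficients of p at monomials u with Au = w (only rows k < m count). *)
definition toric_ideal :: "nat \<Rightarrow> nat \<Rightarrow> (nat \<Rightarrow> nat \<Rightarrow> int) \<Rightarrow> 'k::field mpoly set" where
  "toric_ideal N m B = {p \<in> poly_ring N.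
     \<forall>w :: nat \<Rightarrow> int.
       (\<Sum>u \<in> {u \<in> Poly_Mapping.keys p. \<forall>k<m. cfg_deg N B u k = w k}. Poly_Mapping.lookup p u) = 0}"

definition ideal_sum :: "nat \<Rightarrow> (nat \<Rightarrow> 'k::field mpoly set) \<Rightarrow> 'k mpoly set" where
  "ideal_sum r I = {\<Sum>i<r. f i | f. \<forall>i<r. f i \<in> I i}"

definition radical :: "nat \<Rightarrow> 'k::field mpoly set \<Rightarrow> 'k mpoly set" where
  "radical N J = {f \<in> poly_ring N. \<exists>e::nat. f ^ e \<in> J}"

definition rad_splittable :: "'k::field itself \<Rightarrow> nat \<Rightarrow> nat \<Rightarrow> (nat \<Rightarrow> nat \<Rightarrow> int) \<Rightarrow> nat \<Rightarrow> bool" where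
  "rad_splittable _ N m B r \<longleftrightarrow>
     (\<exists>(ms :: nat \<Rightarrow> nat) (Bs :: nat \<Rightarrow> nat \<Rightarrow> nat \<Rightarrow> int).
        (\<forall>i<r. pointed_cfg N (ms i) (Bs i)) \<and>
        (\<forall>i<r. (toric_ideal N (ms i) (Bs i) :: 'k mpoly set) \<noteq> toric_ideal N m B) \<and>
        (toric_ideal N m B :: 'k mpoly set) =
          radical N (ideal_sum r (\<lambda>i. toric_ideal N (ms i) (Bs i))))"

definition split_rad :: "'k::field itself \<Rightarrow> nat \<Rightarrow> nat \<Rightarrow> (nat \<Rightarrow> nat \<Rightarrow> int) \<Rightarrow> nat" where
  "split_rad K N m B = (LEAST r. rad_splittable K N m B r)"

(* The configuration of the corollary: n \<times> (n+2) matrix with columns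
d_j e_j (j < n), then (a1_j)_j, then (a2_j)_j (0-based indices). *)
definition cor_cfg :: "nat \<Rightarrow> (nat \<Rightarrow> nat) \<Rightarrow> (nat \<Rightarrow> nat) \<Rightarrow> (nat \<Rightarrow> nat) \<Rightarrow> nat \<Rightarrow> nat \<Rightarrow> int" where
  "cor_cfg n d a1 a2 = (\<lambda>j k. if j < n then (if j = k then int (d j) else 0)
                             else if j = n then int (a1 k)
                             else if j = n + 1 then int (a2 k) else 0)"

end

(* Write y = x_n and z = x_(n+1). Via their last two coordinates, the integer relations among the
   columns of A form the lattice  L = {(p, q) : d_j divides p a_(1,j) + q a_(2,j) for all j},
   which has a basis (p0, 0), (p1, q1) and contains (0, q0). These three lattice points give
   binomials g_1 = y^p0 - x^a, g_2 = z^q0 - x^b, g_3 = y^p1 z^q1 - x^c of I_A, and g_i lies in the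
   toric ideal of the configuration B_i obtained from A by appending the row (0, ..., 0, q_i, -p_i).
   No I_(B_i) equals I_A, since it misses another g_j.

   For a binomial x^U - x^V of I_A, the moves g_1, g_2, g_3 connect x^(KU) x^V with x^(KU) x^U for
   some K. If some x_j occurring in g_1 or g_2 neither divides x^U nor can be produced from a y
   or z of x^U, then the row j of A forces y (or z) to be absent from both monomials, and a single
   move along g_2 (or g_1) suffices. Otherwise a power of x^U, rewritten by g_1 and g_2, supplies
   enough y's and z's for moving along the lattice basis. Together with the symmetric statement, the binomial theorem
   puts a power of x^U - x^V into I_(B_1) + I_(B_2) + I_(B_3), and as I_A is spanned by such
   binomials, I_A = rad(I_(B_1) + I_(B_2) + I_(B_3)). The lower bound holds for every nonzero toric
   ideal, because toric ideals are prime, hence radical. *)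

theory Submission
  imports Defs
begin

abbreviation lookup :: "('a \<Rightarrow>\<^sub>0 'b::zero) \<Rightarrow> 'a \<Rightarrow> 'b" where
  "lookup \<equiv> Poly_Mapping.lookup"

abbreviation keys :: "('a \<Rightarrow>\<^sub>0 'b::zero) \<Rightarrow> 'a set" where
  "keys \<equiv> Poly_Mapping.keys"

section \<open>Exponent vectors\<close>

definition exps :: "nat \<Rightarrow> (nat \<Rightarrow>\<^sub>0 nat) set" where
  "exps N = {u. keys u \<subseteq> {..<N}}"

lemma exps_iff_lookup: "u \<in> exps N \<longleftrightarrow> (\<forall>i\<ge>N. lookup u i = 0)"
proof -
  have "keys u \<subseteq> {..<N} \<longleftrightarrow> (\<forall>i. \<not> i < N \<longrightarrow> i \<notin> keys u)"
    by auto
  then show ?thesis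
    by (simp add: exps_def in_keys_iff not_less)
qed

lemma keys_add_nat: "keys (u + v) = keys u \<union> keys (v :: 'a \<Rightarrow>\<^sub>0 nat)"
  by (auto simp: in_keys_iff lookup_add)

lemma exps_add_iff [simp]: "u + v \<in> exps N \<longleftrightarrow> u \<in> exps N \<and> v \<in> exps N"
  by (auto simp: exps_def keys_add_nat)

lemma zero_in_exps [simp]: "0 \<in> exps N"
  unfolding exps_def by simp

definition vec :: "nat \<Rightarrow> (nat \<Rightarrow> nat) \<Rightarrow> (nat \<Rightarrow>\<^sub>0 nat)" where
  "vec N f = Abs_poly_mapping (\<lambda>i. if i < N then f i else 0)"

lemma lookup_vec: "lookup (vec N f) i = (if i < N then f i else 0)"
proof -
  have "finite {i. (if i < N then f i else 0) \<noteq> 0}"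
    by (rule finite_subset[of _ "{..<N}"]) auto
  then show ?thesis unfolding vec_def by simp
qed

lemma vec_in_exps [simp]: "vec N f \<in> exps N"
  unfolding exps_iff_lookup by (simp add: lookup_vec)

definition scale_exp :: "nat \<Rightarrow> ('a \<Rightarrow>\<^sub>0 nat) \<Rightarrow> ('a \<Rightarrow>\<^sub>0 nat)" where
  "scale_exp k u = Poly_Mapping.map ((*) k) u"

lemma lookup_scale_exp [simp]: "lookup (scale_exp k u) i = k * lookup u i"
  unfolding scale_exp_def by transfer (simp add: when_def)

lemma scale_exp_0 [simp]: "scale_exp 0 u = 0"
  by (rule poly_mapping_eqI) simp

lemma scale_exp_Suc: "scale_exp (Suc k) u = scale_exp k u + u"
  by (rule poly_mapping_eqI) (simp add: lookup_add)

lemma keys_scale_exp: "keys (scale_exp k u) \<subseteq> keys u"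
  by (auto simp: in_keys_iff)

lemma scale_exp_in_exps [simp]: "u \<in> exps N \<Longrightarrow> scale_exp k u \<in> exps N"
  by (simp add: exps_iff_lookup)

lemma sum_in_exps [simp]: "(\<And>i. i \<in> I \<Longrightarrow> f i \<in> exps N) \<Longrightarrow> sum f I \<in> exps N"
  by (induction I rule: infinite_finite_induct) simp_all

definition exp_comb :: "'a set \<Rightarrow> ('a \<Rightarrow> nat) \<Rightarrow> ('a \<Rightarrow> (nat \<Rightarrow>\<^sub>0 nat)) \<Rightarrow> (nat \<Rightarrow>\<^sub>0 nat)" where
  "exp_comb I c R = (\<Sum>i\<in>I. scale_exp (c i) (R i))"

lemma lookup_exp_comb: "lookup (exp_comb I c R) l = (\<Sum>i\<in>I. c i * lookup (R i) l)"
  by (simp add: exp_comb_def lookup_sum)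

lemma keys_exp_comb: "keys (exp_comb I c R) \<subseteq> (\<Union>i\<in>I. keys (R i))"
  unfolding exp_comb_def using keys_sum keys_scale_exp by fastforce

lemma exp_comb_in_exps [simp]: "(\<And>i. i \<in> I \<Longrightarrow> R i \<in> exps N) \<Longrightarrow> exp_comb I c R \<in> exps N"
  by (simp add: exp_comb_def)

lemma add_eq_add_disjoint_keysE:
  fixes x y u v :: "'a \<Rightarrow>\<^sub>0 nat"
  assumes eq: "x + v = y + u" and disj: "keys u \<inter> keys v = {}"
  obtains z where "x = z + u" and "y = z + v"
proof
  have coord: "lookup x i + lookup v i = lookup y i + lookup u i" for i
    using arg_cong[OF eq, of "\<lambda>w. lookup w i"] by (simp add: lookup_add)
  have uv: "lookup u i = 0 \<or> lookup v i = 0" for i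
    using disj by (auto simp: in_keys_iff)
  have x: "lookup x i - lookup u i + lookup u i = lookup x i"
    and y: "lookup x i - lookup u i + lookup v i = lookup y i" for i
    using uv[of i] coord[of i] by arith+
  show "x = (x - u) + u"
    by (rule poly_mapping_eqI) (simp add: lookup_add lookup_minus x)
  show "y = (x - u) + v"
    by (rule poly_mapping_eqI) (simp add: lookup_add lookup_minus y)
qed

section \<open>Monomials, binomials and the polynomial ring\<close>

definition monom :: "(nat \<Rightarrow>\<^sub>0 nat) \<Rightarrow> 'k::field mpoly" where
  "monom u = Poly_Mapping.single u 1"

definition binom :: "(nat \<Rightarrow>\<^sub>0 nat) \<Rightarrow> (nat \<Rightarrow>\<^sub>0 nat) \<Rightarrow> 'k::field mpoly" where
  "binom u v = monom u - monom v"

lemma monom_add: "monom (u + v) = monom u * monom v"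
  unfolding monom_def by (simp add: mult_single)

lemma monom_zero: "monom 0 = 1"
  unfolding monom_def by simp

lemma monom_scale_exp: "monom (scale_exp k u) = monom u ^ k"
  by (induction k) (simp_all add: scale_exp_Suc monom_add monom_zero)

lemma binom_add: "binom (w + u) (w + v) = monom w * binom u v"
  unfolding binom_def by (simp add: monom_add right_diff_distrib)

lemma binom_nonzero:
  assumes "u \<noteq> v" shows "(binom u v :: 'k::field mpoly) \<noteq> 0"
proof
  assume "binom u v = (0 :: 'k mpoly)"
  then have "lookup (binom u v :: 'k mpoly) u = 0" by simp
  with assms show False
    by (simp add: binom_def monom_def lookup_minus lookup_single)
qed

lemma sum_single_lookup: "(\<Sum>u\<in>keys p. Poly_Mapping.single u (lookup p u)) = p"
  by (rule poly_mapping_eqI) (simp add: lookup_sum lookup_single when_def in_keys_iff)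

lemma poly_ring_zero [simp]: "0 \<in> poly_ring N"
  unfolding poly_ring_def by simp

lemma poly_ring_add: "p \<in> poly_ring N \<Longrightarrow> q \<in> poly_ring N \<Longrightarrow> p + q \<in> poly_ring N"
  unfolding poly_ring_def using keys_add[of p q] by blast

lemma poly_ring_uminus: "p \<in> poly_ring N \<Longrightarrow> - p \<in> poly_ring N"
  unfolding poly_ring_def by simp

lemma poly_ring_diff: "p \<in> poly_ring N \<Longrightarrow> q \<in> poly_ring N \<Longrightarrow> p - q \<in> poly_ring N"
  using poly_ring_add[of p N "- q"] poly_ring_uminus[of q N] by simp

lemma poly_ring_single: "u \<in> exps N \<Longrightarrow> Poly_Mapping.single u c \<in> poly_ring N"
  unfolding poly_ring_def exps_def by simp

lemma poly_ring_one [simp]: "1 \<in> poly_ring N"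
  using poly_ring_single[of 0 N 1] by simp

lemma poly_ring_mult:
  assumes "p \<in> poly_ring N" and "q \<in> poly_ring N"
  shows "p * q \<in> poly_ring N"
  unfolding poly_ring_def mem_Collect_eq
proof
  fix w assume "w \<in> keys (p * q)"
  then obtain a b where "w = a + b" "a \<in> keys p" "b \<in> keys q"
    using keys_mult[of p q] by blast
  then show "keys w \<subseteq> {..<N}"
    using assms keys_add[of a b] unfolding poly_ring_def by blast
qed

lemma poly_ring_power: "p \<in> poly_ring N \<Longrightarrow> p ^ e \<in> poly_ring N"
  by (induction e) (simp_all add: poly_ring_mult)

lemma poly_ring_of_nat [simp]: "of_nat c \<in> poly_ring N"
  by (induction c) (simp_all add: poly_ring_add)

lemma poly_ring_monom: "u \<in> exps N \<Longrightarrow> monom u \<in> poly_ring N"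
  unfolding monom_def by (rule poly_ring_single)

lemma poly_ring_binom: "u \<in> exps N \<Longrightarrow> v \<in> exps N \<Longrightarrow> binom u v \<in> poly_ring N"
  unfolding binom_def by (intro poly_ring_diff poly_ring_monom)

lemma poly_ring_sum: "(\<And>i. i \<in> I \<Longrightarrow> f i \<in> poly_ring N) \<Longrightarrow> (\<Sum>i\<in>I. f i) \<in> poly_ring N"
  by (induction I rule: infinite_finite_induct) (simp_all add: poly_ring_add)

section \<open>Ideals and radicals\<close>

definition is_ideal :: "nat \<Rightarrow> 'k::field mpoly set \<Rightarrow> bool" where
  "is_ideal N J \<longleftrightarrow> J \<subseteq> poly_ring N \<and> 0 \<in> J \<and> (\<forall>a\<in>J. \<forall>b\<in>J. a + b \<in> J)
     \<and> (\<forall>a\<in>J. \<forall>h\<in>poly_ring N. h * a \<in> J)"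

lemma ideal_subset: "is_ideal N J \<Longrightarrow> a \<in> J \<Longrightarrow> a \<in> poly_ring N"
  unfolding is_ideal_def by blast

lemma ideal_zero: "is_ideal N J \<Longrightarrow> 0 \<in> J"
  unfolding is_ideal_def by blast

lemma ideal_add: "is_ideal N J \<Longrightarrow> a \<in> J \<Longrightarrow> b \<in> J \<Longrightarrow> a + b \<in> J"
  unfolding is_ideal_def by blast

lemma ideal_mult: "is_ideal N J \<Longrightarrow> a \<in> J \<Longrightarrow> h \<in> poly_ring N \<Longrightarrow> h * a \<in> J"
  unfolding is_ideal_def by blast

lemma ideal_uminus: "is_ideal N J \<Longrightarrow> a \<in> J \<Longrightarrow> - a \<in> J"
  using ideal_mult[of N J a "- 1"] poly_ring_uminus[of 1 N] by simp

lemma ideal_sum_closed: "is_ideal N J \<Longrightarrow> (\<And>i. i \<in> I \<Longrightarrow> f i \<in> J) \<Longrightarrow> (\<Sum>i\<in>I. f i) \<in> J"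
  by (induction I rule: infinite_finite_induct) (simp_all add: ideal_zero ideal_add)

lemma ideal_sum_is_ideal:
  fixes I :: "nat \<Rightarrow> 'k::field mpoly set"
  assumes "\<And>i. i < r \<Longrightarrow> is_ideal N (I i)"
  shows "is_ideal N (ideal_sum r I)"
  unfolding is_ideal_def
proof (intro conjI ballI)
  show "ideal_sum r I \<subseteq> poly_ring N"
    unfolding ideal_sum_def using assms by (auto intro!: poly_ring_sum dest: ideal_subset)
  show "0 \<in> ideal_sum r I"
    unfolding ideal_sum_def using assms by (auto intro!: exI[of _ "\<lambda>i. 0"] ideal_zero)
next
  fix a b assume "a \<in> ideal_sum r I" "b \<in> ideal_sum r I"
  then obtain f g where "a = (\<Sum>i<r. f i)" "\<forall>i<r. f i \<in> I i" "b = (\<Sum>i<r. g i)" "\<forall>i<r. g i \<in> I i"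
    unfolding ideal_sum_def by blast
  then show "a + b \<in> ideal_sum r I"
    unfolding ideal_sum_def using assms
    by (auto intro!: exI[of _ "\<lambda>i. f i + g i"] ideal_add simp: sum.distrib)
next
  fix a h :: "'k mpoly" assume "a \<in> ideal_sum r I" "h \<in> poly_ring N"
  then obtain f where "a = (\<Sum>i<r. f i)" "\<forall>i<r. f i \<in> I i"
    unfolding ideal_sum_def by blast
  then show "h * a \<in> ideal_sum r I"
    unfolding ideal_sum_def using assms \<open>h \<in> poly_ring N\<close>
    by (auto intro!: exI[of _ "\<lambda>i. h * f i"] ideal_mult simp: sum_distrib_left)
qed

lemma ideal_sum_member:
  assumes "\<And>i. i < r \<Longrightarrow> is_ideal N (I i)" and "j < r" and "a \<in> I j"
  shows "a \<in> ideal_sum r I"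
  unfolding ideal_sum_def
proof (intro CollectI exI conjI)
  show "a = (\<Sum>i<r. if i = j then a else 0)"
    using assms(2) by simp
  show "\<forall>i<r. (if i = j then a else 0) \<in> I i"
    using assms by (auto intro: ideal_zero)
qed

lemma ideal_sum_subset:
  assumes "is_ideal N J" and "\<And>i. i < r \<Longrightarrow> I i \<subseteq> J"
  shows "ideal_sum r I \<subseteq> J"
  unfolding ideal_sum_def using assms by (auto intro!: ideal_sum_closed)

text \<open>Every term of the binomial expansion of \<open>(f + g)\<^bsup>a + b\<^esup> h\<close> is a multiple of
  \<open>f\<^sup>a h\<close> or of \<open>g\<^sup>b h\<close>.\<close>

lemma ideal_binomial_power:
  fixes f g h :: "'k::field mpoly"
  assumes J: "is_ideal N J" and f: "f \<in> poly_ring N" and g: "g \<in> poly_ring N"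
    and fa: "f ^ a * h \<in> J" and gb: "g ^ b * h \<in> J"
  shows "(f + g) ^ (a + b) * h \<in> J"
proof -
  have "(f + g) ^ (a + b) * h = (\<Sum>k\<le>a + b. of_nat ((a + b) choose k) * f ^ k * g ^ (a + b - k) * h)"
    by (simp add: binomial_ring sum_distrib_right)
  also have "\<dots> \<in> J"
  proof (rule ideal_sum_closed[OF J])
    fix k assume "k \<in> {..a + b}"
    let ?c = "of_nat ((a + b) choose k) :: 'k mpoly"
    show "?c * f ^ k * g ^ (a + b - k) * h \<in> J"
    proof (cases "a \<le> k")
      case True
      then have "?c * f ^ k * g ^ (a + b - k) * h = (?c * f ^ (k - a) * g ^ (a + b - k)) * (f ^ a * h)"
        by (simp add: power_add[symmetric] mult_ac)
      then show ?thesis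
        by (simp only:) (intro ideal_mult[OF J fa] poly_ring_mult poly_ring_power f g poly_ring_of_nat)
    next
      case False
      then have "g ^ (a + b - k) = g ^ (a + b - k - b) * g ^ b"
        by (simp add: power_add[symmetric])
      then have "?c * f ^ k * g ^ (a + b - k) * h = (?c * f ^ k * g ^ (a + b - k - b)) * (g ^ b * h)"
        by (simp add: mult_ac)
      then show ?thesis
        by (simp only:) (intro ideal_mult[OF J gb] poly_ring_mult poly_ring_power f g poly_ring_of_nat)
    qed
  qed
  finally show ?thesis .
qed

lemma radical_is_ideal:
  fixes J :: "'k::field mpoly set"
  assumes J: "is_ideal N J"
  shows "is_ideal N (radical N J)"
  unfolding is_ideal_def
proof (intro conjI ballI)
  show "radical N J \<subseteq> poly_ring N"
    unfolding radical_def by auto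
  show "0 \<in> radical N J"
    unfolding radical_def using ideal_zero[OF J] by (auto intro!: exI[of _ 1])
next
  fix f g :: "'k mpoly" assume "f \<in> radical N J" "g \<in> radical N J"
  then obtain a b where "f ^ a * 1 \<in> J" "g ^ b * 1 \<in> J" "f \<in> poly_ring N" "g \<in> poly_ring N"
    unfolding radical_def by auto
  then have "(f + g) ^ (a + b) * 1 \<in> J"
    by (intro ideal_binomial_power[OF J])
  then show "f + g \<in> radical N J"
    unfolding radical_def using \<open>f \<in> poly_ring N\<close> \<open>g \<in> poly_ring N\<close> by (auto intro: poly_ring_add)
next
  fix f h :: "'k mpoly" assume f: "f \<in> radical N J" and h: "h \<in> poly_ring N"
  then obtain a where "f ^ a \<in> J" "f \<in> poly_ring N"
    unfolding radical_def by blast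
  then have "h ^ a * f ^ a \<in> J"
    by (intro ideal_mult[OF J] poly_ring_power h)
  then show "h * f \<in> radical N J"
    unfolding radical_def using \<open>f \<in> poly_ring N\<close> h by (auto intro: poly_ring_mult simp: power_mult_distrib)
qed

lemma subset_radical: "is_ideal N J \<Longrightarrow> J \<subseteq> radical N J"
  unfolding radical_def by (auto intro: ideal_subset intro!: exI[of _ 1])

lemma radical_mono: "J \<subseteq> J' \<Longrightarrow> radical N J \<subseteq> radical N J'"
  unfolding radical_def by blast

lemma radical_zero: "radical N {0 :: 'k::field mpoly} = {0}"
  unfolding radical_def by auto

section \<open>Toric ideals as kernels\<close>

definition deg_vec :: "nat \<Rightarrow> nat \<Rightarrow> (nat \<Rightarrow> nat \<Rightarrow> int) \<Rightarrow> (nat \<Rightarrow>\<^sub>0 nat) \<Rightarrow> (nat \<Rightarrow>\<^sub>0 int)" where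
  "deg_vec N m B u = Abs_poly_mapping (\<lambda>k. if k < m then cfg_deg N B u k else 0)"

text \<open>\<open>(nat \<Rightarrow>\<^sub>0 int) \<Rightarrow>\<^sub>0 'k\<close> is the Laurent polynomial ring \<open>K[t\<^sub>1\<^sup>\<plusminus>\<^sup>1, t\<^sub>2\<^sup>\<plusminus>\<^sup>1, \<dots>]\<close>,
  and \<open>torus_hom\<close> is the \<open>K\<close>-algebra map \<open>x\<^sup>u \<mapsto> t\<^sup>A\<^sup>u\<close>.\<close>

definition torus_hom :: "nat \<Rightarrow> nat \<Rightarrow> (nat \<Rightarrow> nat \<Rightarrow> int) \<Rightarrow> 'k::field mpoly \<Rightarrow> ((nat \<Rightarrow>\<^sub>0 int) \<Rightarrow>\<^sub>0 'k)" where
  "torus_hom N m B p = (\<Sum>u\<in>keys p. Poly_Mapping.single (deg_vec N m B u) (lookup p u))"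

lemma lookup_deg_vec: "lookup (deg_vec N m B u) k = (if k < m then cfg_deg N B u k else 0)"
proof -
  have "finite {k. (if k < m then cfg_deg N B u k else 0) \<noteq> 0}"
    by (rule finite_subset[of _ "{..<m}"]) auto
  then show ?thesis unfolding deg_vec_def by simp
qed

lemma deg_vec_eq_iff: "deg_vec N m B u = deg_vec N m B v \<longleftrightarrow> (\<forall>k<m. cfg_deg N B u k = cfg_deg N B v k)"
  by (auto simp: poly_mapping_eq_iff fun_eq_iff lookup_deg_vec)

lemma deg_vec_eq_Abs_iff:
  "deg_vec N m B u = Abs_poly_mapping (\<lambda>k. if k < m then w k else 0) \<longleftrightarrow> (\<forall>k<m. cfg_deg N B u k = w k)"
proof -
  have "finite {k. (if k < m then w k else 0) \<noteq> 0}"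
    by (rule finite_subset[of _ "{..<m}"]) auto
  then show ?thesis
    by (auto simp: poly_mapping_eq_iff fun_eq_iff lookup_deg_vec)
qed

lemma deg_vec_add: "deg_vec N m B (u + v) = deg_vec N m B u + deg_vec N m B v"
  by (rule poly_mapping_eqI)
    (simp add: lookup_deg_vec lookup_add cfg_deg_def sum.distrib algebra_simps)

lemma deg_vec_zero: "deg_vec N m B 0 = 0"
  by (rule poly_mapping_eqI) (simp add: lookup_deg_vec cfg_deg_def)

lemma torus_hom_superset:
  assumes "finite S" and "keys p \<subseteq> S"
  shows "torus_hom N m B p = (\<Sum>u\<in>S. Poly_Mapping.single (deg_vec N m B u) (lookup p u))"
  unfolding torus_hom_def
  by (rule sum.mono_neutral_left) (use assms in \<open>auto simp: in_keys_iff\<close>)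

lemma torus_hom_zero: "torus_hom N m B 0 = 0"
  by (simp add: torus_hom_def)

lemma torus_hom_add: "torus_hom N m B (p + q) = torus_hom N m B p + torus_hom N m B q"
proof -
  let ?S = "keys p \<union> keys q"
  have "torus_hom N m B (p + q) = (\<Sum>u\<in>?S. Poly_Mapping.single (deg_vec N m B u) (lookup (p + q) u))"
    using keys_add[of p q] by (intro torus_hom_superset) auto
  also have "\<dots> = torus_hom N m B p + torus_hom N m B q"
    by (subst (1 2) torus_hom_superset[where S = ?S]) (auto simp: lookup_add single_add sum.distrib)
  finally show ?thesis .
qed

lemma torus_hom_single: "torus_hom N m B (Poly_Mapping.single u c) = Poly_Mapping.single (deg_vec N m B u) c"
  by (cases "c = 0") (simp_all add: torus_hom_def)

lemma torus_hom_sum: "torus_hom N m B (\<Sum>i\<in>I. f i) = (\<Sum>i\<in>I. torus_hom N m B (f i))"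
  by (induction I rule: infinite_finite_induct) (simp_all add: torus_hom_zero torus_hom_add)

lemma torus_hom_mult: "torus_hom N m B (p * q) = torus_hom N m B p * torus_hom N m B q"
proof -
  have "p * q = (\<Sum>u\<in>keys p. Poly_Mapping.single u (lookup p u)) * (\<Sum>v\<in>keys q. Poly_Mapping.single v (lookup q v))"
    by (simp only: sum_single_lookup)
  also have "\<dots> = (\<Sum>u\<in>keys p. \<Sum>v\<in>keys q. Poly_Mapping.single (u + v) (lookup p u * lookup q v))"
    by (simp add: sum_product mult_single)
  finally have "torus_hom N m B (p * q) = (\<Sum>u\<in>keys p. \<Sum>v\<in>keys q.
      Poly_Mapping.single (deg_vec N m B u) (lookup p u) * Poly_Mapping.single (deg_vec N m B v) (lookup q v))"
    by (simp add: torus_hom_sum torus_hom_single deg_vec_add mult_single)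
  then show ?thesis
    by (simp add: torus_hom_def sum_product)
qed

lemma torus_hom_one: "torus_hom N m B 1 = 1"
  using torus_hom_single[of N m B 0 1] by (simp add: deg_vec_zero)

lemma torus_hom_power: "torus_hom N m B (p ^ e) = torus_hom N m B p ^ e"
  by (induction e) (simp_all add: torus_hom_one torus_hom_mult)

lemma torus_hom_binom:
  "torus_hom N m B (binom u v :: 'k::field mpoly)
     = Poly_Mapping.single (deg_vec N m B u) 1 - Poly_Mapping.single (deg_vec N m B v) 1"
proof -
  have "torus_hom N m B (- p) = - torus_hom N m B p" for p :: "'k mpoly"
    by (simp add: torus_hom_def single_uminus sum_negf)
  then have "torus_hom N m B (p - q) = torus_hom N m B p - torus_hom N m B q" for p q :: "'k mpoly"
    using torus_hom_add[of N m B p "- q"] by simp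
  then show ?thesis
    by (simp add: binom_def monom_def torus_hom_single)
qed

lemma lookup_torus_hom: "lookup (torus_hom N m B p) w = (\<Sum>u\<in>{u\<in>keys p. deg_vec N m B u = w}. lookup p u)"
  unfolding torus_hom_def lookup_sum by (simp add: lookup_single when_def sum.inter_filter[symmetric])

lemma toric_ideal_eq_kernel: "toric_ideal N m B = {p \<in> poly_ring N. torus_hom N m B p = 0}"
proof -
  have "(\<forall>w. (\<Sum>u\<in>{u\<in>keys p. \<forall>k<m. cfg_deg N B u k = w k}. lookup p u) = 0) \<longleftrightarrow> torus_hom N m B p = 0"
    (is "?fibres \<longleftrightarrow> _") for p :: "'k::field mpoly"
  proof
    assume fibres: ?fibres
    show "torus_hom N m B p = 0"
    proof (rule poly_mapping_eqI)
      fix w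
      show "lookup (torus_hom N m B p) w = lookup 0 w"
      proof (cases "\<forall>k\<ge>m. lookup w k = 0")
        case True
        then have "deg_vec N m B u = w \<longleftrightarrow> (\<forall>k<m. cfg_deg N B u k = lookup w k)" for u
          by (auto simp: poly_mapping_eq_iff fun_eq_iff lookup_deg_vec not_less)
        then have "{u\<in>keys p. deg_vec N m B u = w} = {u\<in>keys p. \<forall>k<m. cfg_deg N B u k = lookup w k}"
          by blast
        then show ?thesis
          using fibres by (simp add: lookup_torus_hom)
      next
        case False
        then have no_fibre: "{u\<in>keys p. deg_vec N m B u = w} = {}"
          by (auto simp: lookup_deg_vec)
        show ?thesis
          by (simp only: lookup_torus_hom no_fibre) simp
      qed
    qed
  next
    assume hom: "torus_hom N m B p = 0"
    show ?fibres
    proof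
      fix w :: "nat \<Rightarrow> int"
      have "{u\<in>keys p. \<forall>k<m. cfg_deg N B u k = w k}
          = {u\<in>keys p. deg_vec N m B u = Abs_poly_mapping (\<lambda>k. if k < m then w k else 0)}"
        by (simp add: deg_vec_eq_Abs_iff)
      then show "(\<Sum>u\<in>{u\<in>keys p. \<forall>k<m. cfg_deg N B u k = w k}. lookup p u) = 0"
        using hom lookup_torus_hom[of N m B p] by simp
    qed
  qed
  then show ?thesis
    unfolding toric_ideal_def by auto
qed

lemma toric_ideal_is_ideal: "is_ideal N (toric_ideal N m B :: 'k::field mpoly set)"
  unfolding is_ideal_def toric_ideal_eq_kernel
  by (auto simp: poly_ring_add poly_ring_mult torus_hom_add torus_hom_mult torus_hom_zero)

lemma radical_toric_ideal: "radical N (toric_ideal N m B :: 'k::field mpoly set) = toric_ideal N m B"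
proof
  show "radical N (toric_ideal N m B) \<subseteq> (toric_ideal N m B :: 'k mpoly set)"
    unfolding radical_def toric_ideal_eq_kernel by (auto simp: torus_hom_power)
  show "(toric_ideal N m B :: 'k mpoly set) \<subseteq> radical N (toric_ideal N m B)"
    by (rule subset_radical[OF toric_ideal_is_ideal])
qed

lemma binom_mem_toric_ideal_iff:
  assumes "u \<in> exps N" and "v \<in> exps N"
  shows "(binom u v :: 'k::field mpoly) \<in> toric_ideal N m B \<longleftrightarrow> deg_vec N m B u = deg_vec N m B v"
proof
  assume "(binom u v :: 'k mpoly) \<in> toric_ideal N m B"
  then have "lookup (torus_hom N m B (binom u v :: 'k mpoly)) (deg_vec N m B u) = 0"
    unfolding toric_ideal_eq_kernel by simp
  then show "deg_vec N m B u = deg_vec N m B v"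
    by (rule contrapos_pp) (simp add: torus_hom_binom lookup_minus lookup_single)
next
  assume "deg_vec N m B u = deg_vec N m B v"
  then show "(binom u v :: 'k mpoly) \<in> toric_ideal N m B"
    unfolding toric_ideal_eq_kernel using assms by (simp add: poly_ring_binom torus_hom_binom)
qed

lemma toric_ideal_mono:
  assumes finer: "\<And>u v. u \<in> exps N \<Longrightarrow> v \<in> exps N \<Longrightarrow>
      deg_vec N m' B' u = deg_vec N m' B' v \<Longrightarrow> deg_vec N m B u = deg_vec N m B v"
  shows "(toric_ideal N m' B' :: 'k::field mpoly set) \<subseteq> toric_ideal N m B"
proof
  fix p :: "'k mpoly" assume "p \<in> toric_ideal N m' B'"
  then have p: "p \<in> poly_ring N" and p0: "torus_hom N m' B' p = 0"
    unfolding toric_ideal_eq_kernel by auto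
  have exps: "u \<in> exps N" if "u \<in> keys p" for u
    using p that unfolding poly_ring_def exps_def by auto
  have "torus_hom N m B p = 0"
  proof (rule poly_mapping_eqI)
    fix w
    let ?S = "{u \<in> keys p. deg_vec N m B u = w}"
    have "lookup (torus_hom N m B p) w = (\<Sum>w'\<in>deg_vec N m' B' ` ?S. \<Sum>u\<in>{u \<in> ?S. deg_vec N m' B' u = w'}. lookup p u)"
      unfolding lookup_torus_hom by (rule sum.image_gen) simp
    also have "\<dots> = 0"
    proof (rule sum.neutral, rule ballI)
      fix w' assume "w' \<in> deg_vec N m' B' ` ?S"
      then obtain u0 where "u0 \<in> ?S" "w' = deg_vec N m' B' u0" by blast
      then have "{u \<in> ?S. deg_vec N m' B' u = w'} = {u \<in> keys p. deg_vec N m' B' u = w'}"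
        using finer exps by auto
      then show "(\<Sum>u\<in>{u \<in> ?S. deg_vec N m' B' u = w'}. lookup p u) = 0"
        using p0 lookup_torus_hom[of N m' B' p w'] by simp
    qed
    finally show "lookup (torus_hom N m B p) w = lookup 0 w" by simp
  qed
  then show "p \<in> toric_ideal N m B"
    unfolding toric_ideal_eq_kernel using p by simp
qed

text \<open>Toric ideals are generated by binomials: replacing every monomial of \<open>p\<close> by a
  fixed representative of its fibre turns \<open>p\<close> into \<open>0\<close>, so \<open>p\<close> is a combination of the
  binomials between monomials and their representatives.\<close>

lemma toric_ideal_subset_of_binoms:
  assumes R: "is_ideal N (R :: 'k::field mpoly set)"
    and binoms: "\<And>u v. u \<in> exps N \<Longrightarrow> v \<in> exps N \<Longrightarrow> deg_vec N m B u = deg_vec N m B v \<Longrightarrow> binom u v \<in> R"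
  shows "toric_ideal N m B \<subseteq> R"
proof
  fix p :: "'k mpoly" assume "p \<in> toric_ideal N m B"
  then have p: "p \<in> poly_ring N" and p0: "torus_hom N m B p = 0"
    unfolding toric_ideal_eq_kernel by auto
  have exps: "u \<in> exps N" if "u \<in> keys p" for u
    using p that unfolding poly_ring_def exps_def by auto
  define r where "r u = (SOME v. v \<in> keys p \<and> deg_vec N m B v = deg_vec N m B u)" for u
  have r: "r u \<in> keys p \<and> deg_vec N m B (r u) = deg_vec N m B u" if "u \<in> keys p" for u
    unfolding r_def by (rule someI_ex) (use that in blast)
  have r_eq: "r u = r u'" if "deg_vec N m B u = deg_vec N m B u'" for u u'
    unfolding r_def using that by simp
  have reps: "(\<Sum>u\<in>keys p. Poly_Mapping.single (r u) (lookup p u)) = 0"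
  proof (rule poly_mapping_eqI)
    fix v
    have "lookup (\<Sum>u\<in>keys p. Poly_Mapping.single (r u) (lookup p u)) v = (\<Sum>u\<in>{u\<in>keys p. r u = v}. lookup p u)"
      by (simp add: lookup_sum lookup_single when_def sum.inter_filter[symmetric])
    also have "\<dots> = 0"
    proof (cases "\<exists>u0\<in>keys p. r u0 = v")
      case True
      then obtain u0 where u0: "u0 \<in> keys p" "r u0 = v" by blast
      have "{u\<in>keys p. r u = v} = {u\<in>keys p. deg_vec N m B u = deg_vec N m B v}"
        using r r_eq u0 by (metis (lifting))
      then show ?thesis
        using lookup_torus_hom[of N m B p "deg_vec N m B v"] p0 by simp
    next
      case False
      then have "{u\<in>keys p. r u = v} = {}" by auto
      then show ?thesis by (simp only:) simp
    qed
    finally show "lookup (\<Sum>u\<in>keys p. Poly_Mapping.single (r u) (lookup p u)) v = lookup 0 v" by simp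
  qed
  have "p = (\<Sum>u\<in>keys p. Poly_Mapping.single u (lookup p u)) - (\<Sum>u\<in>keys p. Poly_Mapping.single (r u) (lookup p u))"
    by (simp add: reps sum_single_lookup)
  also have "\<dots> = (\<Sum>u\<in>keys p. Poly_Mapping.single 0 (lookup p u) * binom u (r u))"
    by (simp add: sum_subtractf[symmetric] binom_def monom_def right_diff_distrib mult_single)
  also have "\<dots> \<in> R"
    by (intro ideal_sum_closed[OF R] ideal_mult[OF R] binoms poly_ring_single) (use r exps in auto)
  finally show "p \<in> R" .
qed

section \<open>Connecting monomials by binomials of an ideal\<close>

definition linked :: "'k::field mpoly set \<Rightarrow> (nat \<Rightarrow>\<^sub>0 nat) \<Rightarrow> (nat \<Rightarrow>\<^sub>0 nat) \<Rightarrow> bool" where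
  "linked J u v \<longleftrightarrow> binom u v \<in> J"

context
  fixes N :: nat and J :: "'k::field mpoly set"
  assumes J: "is_ideal N J"
begin

lemma linked_refl: "linked J u u"
  unfolding linked_def binom_def by (simp add: ideal_zero[OF J])

lemma linked_sym: "linked J u v \<Longrightarrow> linked J v u"
  unfolding linked_def using ideal_uminus[OF J, of "binom u v"] by (simp add: binom_def)

lemma linked_trans: "linked J u v \<Longrightarrow> linked J v w \<Longrightarrow> linked J u w"
  unfolding linked_def using ideal_add[OF J, of "binom u v" "binom v w"] by (simp add: binom_def)

lemma linked_add_left: "linked J u v \<Longrightarrow> w \<in> exps N \<Longrightarrow> linked J (w + u) (w + v)"
  unfolding linked_def binom_add by (rule ideal_mult[OF J _ poly_ring_monom])

lemma linked_add:
  assumes "linked J u v" and "linked J u' v'" and "u \<in> exps N" and "v' \<in> exps N"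
  shows "linked J (u + u') (v + v')"
proof (rule linked_trans)
  show "linked J (u + u') (u + v')"
    using linked_add_left[OF assms(2,3)] .
  show "linked J (u + v') (v + v')"
    using linked_add_left[OF assms(1,4)] by (simp add: add.commute)
qed

lemma linked_scale_exp:
  assumes "linked J u v" and "u \<in> exps N" and "v \<in> exps N"
  shows "linked J (scale_exp k u) (scale_exp k v)"
  by (induction k) (simp_all add: linked_refl scale_exp_Suc linked_add assms)

lemma linked_exp_comb:
  assumes "finite I" and "\<And>i. i \<in> I \<Longrightarrow> linked J (P i) (Q i)"
    and "\<And>i. i \<in> I \<Longrightarrow> P i \<in> exps N" and "\<And>i. i \<in> I \<Longrightarrow> Q i \<in> exps N"
  shows "linked J (exp_comb I c P) (exp_comb I c Q)"
  unfolding exp_comb_def using assms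
  by (induction I rule: finite_induct) (simp_all add: linked_refl linked_add linked_scale_exp)

text \<open>First trade \<open>P\<^sub>i\<close> for \<open>Q\<^sub>i\<close> (\<open>T\<^sub>i\<close> times), then \<open>Q\<^sub>i\<close> for \<open>P\<^sub>i\<close> (\<open>c\<^sub>i\<close> times): disjointness of
  the supports guarantees that the intermediate vector contains \<open>\<Sum>\<^sub>i c\<^sub>i Q\<^sub>i\<close>.\<close>

lemma linked_two_phase:
  assumes fin: "finite I" and gens: "\<And>i. i \<in> I \<Longrightarrow> linked J (P i) (Q i)"
    and P: "\<And>i. i \<in> I \<Longrightarrow> P i \<in> exps N" and Q: "\<And>i. i \<in> I \<Longrightarrow> Q i \<in> exps N"
    and disj: "\<And>i i'. i \<in> I \<Longrightarrow> i' \<in> I \<Longrightarrow> keys (P i) \<inter> keys (Q i') = {}"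
    and Z: "Z \<in> exps N"
    and swap: "Z + exp_comb I T Q + exp_comb I c P = X + exp_comb I c Q"
  shows "linked J (Z + exp_comb I T P) X"
proof -
  have combs: "linked J (exp_comb I e P) (exp_comb I e Q)" for e
    using fin gens P Q by (rule linked_exp_comb)
  have first_phase: "linked J (Z + exp_comb I T P) (Z + exp_comb I T Q)"
    by (rule linked_add_left[OF combs Z])
  have "keys (exp_comb I c Q) \<inter> keys (exp_comb I c P) = {}"
    using keys_exp_comb[of I c P] keys_exp_comb[of I c Q] disj by blast
  then obtain z where z: "Z + exp_comb I T Q = z + exp_comb I c Q" and X: "X = z + exp_comb I c P"
    by (rule add_eq_add_disjoint_keysE[OF swap])
  have "z \<in> exps N"
    using z Z Q by (metis exps_add_iff exp_comb_in_exps)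
  then have second_phase: "linked J (Z + exp_comb I T Q) X"
    unfolding z X by (rule linked_sym[OF linked_add_left[OF combs]])
  show ?thesis
    by (rule linked_trans[OF first_phase second_phase])
qed

lemma linked_by_moves:
  fixes P Q :: "'a \<Rightarrow> (nat \<Rightarrow>\<^sub>0 nat)" and k :: "'a \<Rightarrow> int"
  assumes fin: "finite I"
    and gens: "\<And>i. i \<in> I \<Longrightarrow> linked J (P i) (Q i)"
    and P: "\<And>i. i \<in> I \<Longrightarrow> P i \<in> exps N" and Q: "\<And>i. i \<in> I \<Longrightarrow> Q i \<in> exps N"
    and disj: "\<And>i i'. i \<in> I \<Longrightarrow> i' \<in> I \<Longrightarrow> keys (P i) \<inter> keys (Q i') = {}"
    and Y: "Y \<in> exps N"
    and move: "\<And>l. int (lookup X l)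
      = int (lookup Y l) + (\<Sum>i\<in>I. k i * (int (lookup (P i) l) - int (lookup (Q i) l)))"
    and enough: "\<And>l. (\<Sum>i\<in>I. nat (- k i) * lookup (P i) l) \<le> lookup Y l"
  shows "linked J Y X"
proof -
  define T where "T i = nat (- k i)" for i
  define c where "c i = nat (k i)" for i
  define Z where "Z = Y - exp_comb I T P"
  have Y_eq: "Y = Z + exp_comb I T P"
    by (rule poly_mapping_eqI) (use enough in \<open>simp add: Z_def T_def lookup_add lookup_minus lookup_exp_comb\<close>)
  have trade: "k i * (int p - int q) = int (c i * p) - int (T i * p) - int (c i * q) + int (T i * q)"
    for i p q
    by (cases "k i \<ge> 0") (simp_all add: c_def T_def algebra_simps)
  have swap: "Z + exp_comb I T Q + exp_comb I c P = X + exp_comb I c Q"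
  proof (rule poly_mapping_eqI)
    fix l
    have "int (lookup Z l) = int (lookup Y l) - (\<Sum>i\<in>I. int (T i * lookup (P i) l))"
      using enough[of l] by (simp add: Z_def T_def lookup_minus lookup_exp_comb of_nat_diff)
    then show "lookup (Z + exp_comb I T Q + exp_comb I c P) l = lookup (X + exp_comb I c Q) l"
      using move[of l] unfolding of_nat_eq_iff[where 'a = int, symmetric]
      by (simp add: lookup_add lookup_exp_comb trade sum.distrib sum_subtractf)
  qed
  have "Z \<in> exps N"
    using Y Y_eq by (metis exps_add_iff)
  from linked_two_phase[OF fin gens P Q disj this swap] show ?thesis
    unfolding Y_eq[symmetric] .
qed

lemma linked_by_move:
  assumes gen: "linked J P Q" and P: "P \<in> exps N" and Q: "Q \<in> exps N"
    and disj: "keys P \<inter> keys Q = {}" and V: "V \<in> exps N"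
    and move: "\<And>l. int (lookup U l) = int (lookup V l) + k * (int (lookup P l) - int (lookup Q l))"
  shows "linked J V U"
proof (rule linked_by_moves[where I = "{()}" and P = "\<lambda>_. P" and Q = "\<lambda>_. Q" and k = "\<lambda>_. k"])
  fix l
  have PQ: "lookup P l = 0 \<or> lookup Q l = 0"
    using disj by (auto simp: in_keys_iff)
  have "int (nat (- k) * lookup P l) \<le> int (lookup V l)"
  proof (cases "k \<ge> 0")
    case False
    then have "int (nat (- k) * lookup P l) = - k * int (lookup P l)"
      by simp
    with PQ move[of l] show ?thesis
      by auto
  qed simp
  then show "(\<Sum>i\<in>{()}. nat (- k) * lookup P l) \<le> lookup V l"
    by (simp only: of_nat_le_iff) simp
qed (use assms in auto)

lemma power_mult_binom_mem_if_linked: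
  assumes "linked J (scale_exp K U + V) (scale_exp K U + U)" and "U \<in> exps N"
  shows "monom U ^ K * binom U V \<in> J"
proof -
  have "monom U ^ K * binom V U \<in> J"
    using assms(1) by (simp add: linked_def binom_add monom_scale_exp)
  from ideal_uminus[OF J this] show ?thesis
    by (simp add: binom_def algebra_simps)
qed

text \<open>The hypotheses put \<open>x\<^bsup>KU\<^esup> (x\<^sup>U - x\<^sup>V)\<close> and \<open>x\<^bsup>K'V\<^esup> (x\<^sup>U - x\<^sup>V)\<close> into \<open>J\<close>, so
  the binomial theorem puts \<open>(x\<^sup>U - x\<^sup>V)\<^bsup>K + K' + 1\<^esup>\<close> into \<open>J\<close>.\<close>

lemma binom_mem_radical_if_linked:
  assumes U: "U \<in> exps N" and V: "V \<in> exps N"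
    and UV: "linked J (scale_exp K U + V) (scale_exp K U + U)"
    and VU: "linked J (scale_exp K' V + U) (scale_exp K' V + V)"
  shows "binom U V \<in> radical N J"
proof -
  let ?x = "monom U :: 'k mpoly" and ?y = "monom V :: 'k mpoly"
  have x: "?x ^ K * (?x - ?y) \<in> J"
    using power_mult_binom_mem_if_linked[OF UV U] by (simp add: binom_def)
  have "?y ^ K' * (?y - ?x) \<in> J"
    using power_mult_binom_mem_if_linked[OF VU V] by (simp add: binom_def)
  then have "(- ((- 1) ^ K')) * (?y ^ K' * (?y - ?x)) \<in> J"
    by (rule ideal_mult[OF J]) (intro poly_ring_power poly_ring_uminus poly_ring_one)
  moreover have "(- ?y) ^ K' * (?x - ?y) = (- ((- 1) ^ K')) * (?y ^ K' * (?y - ?x))"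
    by (simp add: power_minus[of ?y] algebra_simps)
  ultimately have y: "(- ?y) ^ K' * (?x - ?y) \<in> J"
    by (simp only:)
  have "(?x + - ?y) ^ (K + K') * (?x - ?y) \<in> J"
    using U V by (intro ideal_binomial_power[OF J _ _ x y] poly_ring_monom poly_ring_uminus)
  then have "binom U V ^ (K + K' + 1) \<in> J"
    by (simp add: binom_def mult.commute)
  then show ?thesis
    unfolding radical_def using poly_ring_binom[OF U V] by blast
qed

end

lemma not_rad_splittable_0:
  assumes "(toric_ideal N m B :: 'k::field mpoly set) \<noteq> {0}"
  shows "\<not> rad_splittable TYPE('k) N m B 0"
proof
  assume "rad_splittable TYPE('k) N m B 0"
  then have "(toric_ideal N m B :: 'k mpoly set) = radical N {0}"
    unfolding rad_splittable_def ideal_sum_def by simp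
  with assms show False
    by (simp add: radical_zero)
qed

text \<open>Toric ideals are radical, so a single summand would have to equal \<open>I\<^sub>A\<close> itself.\<close>

lemma not_rad_splittable_1: "\<not> rad_splittable TYPE('k::field) N m B 1"
proof
  assume "rad_splittable TYPE('k) N m B 1"
  then obtain ms Bs where ne: "(toric_ideal N (ms 0) (Bs 0) :: 'k mpoly set) \<noteq> toric_ideal N m B"
    and eq: "(toric_ideal N m B :: 'k mpoly set) = radical N (ideal_sum 1 (\<lambda>i. toric_ideal N (ms i) (Bs i)))"
    unfolding rad_splittable_def by blast
  have "ideal_sum 1 (\<lambda>i. toric_ideal N (ms i) (Bs i) :: 'k mpoly set) = toric_ideal N (ms 0) (Bs 0)"
    unfolding ideal_sum_def by (auto intro: exI[of _ "\<lambda>_. x" for x])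
  with eq ne show False
    by (simp add: radical_toric_ideal)
qed

lemma split_rad_bounds:
  assumes "(toric_ideal N m B :: 'k::field mpoly set) \<noteq> {0}" and "rad_splittable TYPE('k) N m B r"
  shows "2 \<le> split_rad TYPE('k) N m B \<and> split_rad TYPE('k) N m B \<le> r"
proof
  show "split_rad TYPE('k) N m B \<le> r"
    unfolding split_rad_def using assms(2) by (rule Least_le)
  have "rad_splittable TYPE('k) N m B (split_rad TYPE('k) N m B)"
    unfolding split_rad_def using assms(2) by (rule LeastI)
  then show "2 \<le> split_rad TYPE('k) N m B"
    using not_rad_splittable_0[OF assms(1)] not_rad_splittable_1
    by (metis One_nat_def less_2_cases not_le)
qed

section \<open>The lattice of the configuration\<close>

definition min_pos :: "int set \<Rightarrow> nat" where
  "min_pos S = (LEAST g. 0 < g \<and> int g \<in> S)"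

lemma min_pos:
  assumes "0 < g" and "int g \<in> S"
  shows "0 < min_pos S" and "int (min_pos S) \<in> S"
  using LeastI[of "\<lambda>g. 0 < g \<and> int g \<in> S" g] assms unfolding min_pos_def by auto

lemma min_pos_dvd:
  assumes closed: "\<And>x y c. x \<in> S \<Longrightarrow> y \<in> S \<Longrightarrow> x - c * y \<in> S"
    and "0 < g" and "int g \<in> S" and "x \<in> S"
  shows "int (min_pos S) dvd x"
proof -
  let ?g = "int (min_pos S)"
  have g: "0 < ?g" "?g \<in> S"
    using min_pos[OF assms(2,3)] by simp_all
  have r: "x mod ?g \<in> S"
    using closed[OF \<open>x \<in> S\<close> g(2), of "x div ?g"] by (simp add: minus_div_mult_eq_mod)
  have "x mod ?g = 0"
  proof (rule ccontr)
    assume "x mod ?g \<noteq> 0"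
    with r g(1) have "0 < nat (x mod ?g) \<and> int (nat (x mod ?g)) \<in> S"
      by (simp add: order_le_neq_trans)
    then have "min_pos S \<le> nat (x mod ?g)"
      unfolding min_pos_def by (rule Least_le)
    moreover have "0 \<le> x mod ?g" and "x mod ?g < ?g"
      using g(1) by simp_all
    ultimately show False
      by (simp add: le_nat_iff)
  qed
  then show ?thesis
    by (simp add: dvd_eq_mod_eq_0)
qed

text \<open>The variables are \<open>x\<^sub>0, \<dots>, x\<^sub>n\<^sub>-\<^sub>1\<close> and \<open>y = x\<^sub>n\<close>, \<open>z = x\<^sub>n\<^sub>+\<^sub>1\<close>.\<close>

locale simplicial_cfg =
  fixes n :: nat and d a1 a2 :: "nat \<Rightarrow> nat"
  assumes d_pos: "\<forall>j<n. d j > 0"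
    and a1_nonzero: "\<exists>j<n. a1 j \<noteq> 0"
    and a2_nonzero: "\<exists>j<n. a2 j \<noteq> 0"
begin

abbreviation A :: "nat \<Rightarrow> nat \<Rightarrow> int" where
  "A \<equiv> cor_cfg n d a1 a2"

declare add_2_eq_Suc' [simp del] \<comment> \<open>keep \<open>n + 2\<close> in the form used by the lemmas\<close>

lemma row_sum_A:
  assumes "k < n"
  shows "(\<Sum>j<n + 2. int (v j) * A j k)
    = int (d k) * int (v k) + int (a1 k) * int (v n) + int (a2 k) * int (v (Suc n))"
proof -
  have "(\<Sum>j<n. int (v j) * A j k) = (\<Sum>j<n. if j = k then int (d k) * int (v k) else 0)"
    by (rule sum.cong) (auto simp: cor_cfg_def)
  then show ?thesis
    using assms by (simp add: numeral_2_eq_2 cor_cfg_def)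
qed

lemma cfg_deg_A:
  "k < n \<Longrightarrow> cfg_deg (n + 2) A u k
    = int (d k) * int (lookup u k) + int (a1 k) * int (lookup u n) + int (a2 k) * int (lookup u (Suc n))"
  unfolding cfg_deg_def by (rule row_sum_A)

lemma deg_vec_A_diff:
  assumes "deg_vec (n + 2) n A U = deg_vec (n + 2) n A V" and "j < n"
  shows "int (d j) * (int (lookup U j) - int (lookup V j))
    = - ((int (lookup U n) - int (lookup V n)) * int (a1 j)
         + (int (lookup U (Suc n)) - int (lookup V (Suc n))) * int (a2 j))"
proof -
  have "cfg_deg (n + 2) A U j = cfg_deg (n + 2) A V j"
    using assms unfolding deg_vec_eq_iff by blast
  then show ?thesis
    unfolding cfg_deg_A[OF assms(2)] by (simp add: algebra_simps)
qed

lemma pointed_A: "pointed_cfg (n + 2) n A"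
  unfolding pointed_cfg_def
proof (intro allI impI)
  fix v :: "nat \<Rightarrow> nat" and j
  assume rows: "\<forall>k<n. (\<Sum>j<n + 2. int (v j) * A j k) = 0" and j: "j < n + 2"
  have zero: "d k * v k = 0 \<and> a1 k * v n = 0 \<and> a2 k * v (Suc n) = 0" if "k < n" for k
  proof -
    have "(\<Sum>j<n + 2. int (v j) * A j k) = 0"
      using rows that by blast
    then have "int (d k * v k) + int (a1 k * v n) + int (a2 k * v (Suc n)) = 0"
      unfolding row_sum_A[OF that] by simp
    then show ?thesis by linarith
  qed
  obtain j1 j2 where "j1 < n" "a1 j1 \<noteq> 0" "j2 < n" "a2 j2 \<noteq> 0"
    using a1_nonzero a2_nonzero by blast
  then have "v n = 0" "v (Suc n) = 0"
    using zero[of j1] zero[of j2] by auto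
  moreover have "v j = 0" if "j < n"
    using zero[OF that] d_pos that by auto
  ultimately show "v j = 0"
    using j by (metis add_2_eq_Suc' less_SucE)
qed

definition in_lattice :: "int \<Rightarrow> int \<Rightarrow> bool" where
  "in_lattice p q \<longleftrightarrow> (\<forall>j<n. int (d j) dvd p * int (a1 j) + q * int (a2 j))"

lemma in_lattice_diff: "in_lattice p q \<Longrightarrow> in_lattice p' q' \<Longrightarrow> in_lattice (p - c * p') (q - c * q')"
  unfolding in_lattice_def
proof (intro allI impI)
  fix j assume "\<forall>j<n. int (d j) dvd p * int (a1 j) + q * int (a2 j)"
    and "\<forall>j<n. int (d j) dvd p' * int (a1 j) + q' * int (a2 j)" and "j < n"
  then have "int (d j) dvd (p * int (a1 j) + q * int (a2 j)) - c * (p' * int (a1 j) + q' * int (a2 j))"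
    by (intro dvd_diff dvd_mult) auto
  then show "int (d j) dvd (p - c * p') * int (a1 j) + (q - c * q') * int (a2 j)"
    by (simp add: algebra_simps)
qed

lemma in_lattice_prod_0: "in_lattice (int (\<Prod>j<n. d j)) 0"
  unfolding in_lattice_def by (auto intro!: dvd_mult2 simp: int_dvd_int_iff dvd_prodI)

lemma in_lattice_0_prod: "in_lattice 0 (int (\<Prod>j<n. d j))"
  unfolding in_lattice_def by (auto intro!: dvd_mult2 simp: int_dvd_int_iff dvd_prodI)

lemma prod_d_pos: "0 < (\<Prod>j<n. d j)"
  using d_pos by (simp add: prod_pos)

definition p0 :: nat where "p0 = min_pos {p. in_lattice p 0}"
definition q0 :: nat where "q0 = min_pos {q. in_lattice 0 q}"
definition q1 :: nat where "q1 = min_pos {q. \<exists>p. in_lattice p q}"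
definition p1 :: nat where "p1 = nat ((SOME p. in_lattice p (int q1)) mod int p0)"

lemma p0: "0 < p0" "in_lattice (int p0) 0"
  using min_pos[OF prod_d_pos, of "{p. in_lattice p 0}"] in_lattice_prod_0 unfolding p0_def by auto

lemma q0: "0 < q0" "in_lattice 0 (int q0)"
  using min_pos[OF prod_d_pos, of "{q. in_lattice 0 q}"] in_lattice_0_prod unfolding q0_def by auto

lemma q1: "0 < q1" "\<exists>p. in_lattice p (int q1)"
  using min_pos[OF prod_d_pos, of "{q. \<exists>p. in_lattice p q}"] in_lattice_0_prod unfolding q1_def by auto

lemma p0_dvd:
  assumes "in_lattice p 0" shows "int p0 dvd p"
  unfolding p0_def
proof (rule min_pos_dvd[OF _ prod_d_pos])
  show "x - c * y \<in> {p. in_lattice p 0}" if "x \<in> {p. in_lattice p 0}" "y \<in> {p. in_lattice p 0}" for x y c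
    using in_lattice_diff[of x 0 y 0 c] that by simp
qed (use assms in_lattice_prod_0 in simp_all)

lemma q0_dvd:
  assumes "in_lattice 0 q" shows "int q0 dvd q"
  unfolding q0_def
proof (rule min_pos_dvd[OF _ prod_d_pos])
  show "x - c * y \<in> {q. in_lattice 0 q}" if "x \<in> {q. in_lattice 0 q}" "y \<in> {q. in_lattice 0 q}" for x y c
    using in_lattice_diff[of 0 x 0 y c] that by simp
qed (use assms in_lattice_0_prod in simp_all)

lemma q1_dvd:
  assumes "in_lattice p q" shows "int q1 dvd q"
  unfolding q1_def
proof (rule min_pos_dvd[OF _ prod_d_pos])
  show "x - c * y \<in> {q. \<exists>p. in_lattice p q}"
    if "x \<in> {q. \<exists>p. in_lattice p q}" "y \<in> {q. \<exists>p. in_lattice p q}" for x y c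
    using in_lattice_diff[of _ x _ y c] that by blast
qed (use assms in_lattice_0_prod in auto)

lemma p1: "in_lattice (int p1) (int q1)"
proof -
  let ?p = "SOME p. in_lattice p (int q1)"
  have "in_lattice ?p (int q1)"
    using q1(2) by (rule someI_ex)
  from in_lattice_diff[OF this p0(2), of "?p div int p0"]
  show ?thesis
    using p0(1) by (simp add: p1_def minus_div_mult_eq_mod)
qed

lemma in_lattice_cases:
  assumes "in_lattice p q"
  obtains k0 k2 where "p = k0 * int p0 + k2 * int p1" and "q = k2 * int q1"
proof -
  obtain k2 where "q = int q1 * k2"
    using q1_dvd[OF assms] by (rule dvdE)
  then have k2: "q = k2 * int q1"
    by (simp add: mult.commute)
  have "in_lattice (p - k2 * int p1) 0"
    using in_lattice_diff[OF assms p1, of k2] k2 by simp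
  then obtain k0 where "p - k2 * int p1 = int p0 * k0"
    using p0_dvd by (blast elim: dvdE)
  then show ?thesis
    using that k2 by (simp add: algebra_simps)
qed


text \<open>The binomials \<open>g\<^sub>1, g\<^sub>2, g\<^sub>3\<close> are \<open>x\<^bsup>yz_gen i\<^esup> - x\<^bsup>x_gen i\<^esup>\<close> for \<open>i = 0, 1, 2\<close>: the lattice
  point \<open>(gp i, gq i)\<close> prescribes the exponents of \<open>y, z\<close>, and the \<open>x\<close>-part is the unique one
  of the same \<open>A\<close>-degree.\<close>

definition gp :: "nat \<Rightarrow> nat" where
  "gp i = (if i = 0 then p0 else if i = 1 then 0 else p1)"

definition gq :: "nat \<Rightarrow> nat" where
  "gq i = (if i = 0 then 0 else if i = 1 then q0 else q1)"

definition yz_gen :: "nat \<Rightarrow> (nat \<Rightarrow>\<^sub>0 nat)" where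
  "yz_gen i = vec (n + 2) (\<lambda>l. if l = n then gp i else if l = Suc n then gq i else 0)"

definition x_gen :: "nat \<Rightarrow> (nat \<Rightarrow>\<^sub>0 nat)" where
  "x_gen i = vec (n + 2) (\<lambda>l. if l < n then (gp i * a1 l + gq i * a2 l) div d l else 0)"

lemma in_lattice_gen: "in_lattice (int (gp i)) (int (gq i))"
  using p0(2) q0(2) p1 by (simp add: gp_def gq_def)

lemma lookup_yz_gen: "lookup (yz_gen i) l = (if l = n then gp i else if l = Suc n then gq i else 0)"
  by (simp add: yz_gen_def lookup_vec)

lemma lookup_x_gen: "lookup (x_gen i) l = (if l < n then (gp i * a1 l + gq i * a2 l) div d l else 0)"
  by (simp add: x_gen_def lookup_vec)

lemma d_mult_x_gen:
  assumes "j < n"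
  shows "int (d j) * int (lookup (x_gen i) j) = int (gp i) * int (a1 j) + int (gq i) * int (a2 j)"
proof -
  have "d j dvd gp i * a1 j + gq i * a2 j"
    using in_lattice_gen assms unfolding in_lattice_def by (metis of_nat_add of_nat_mult int_dvd_int_iff)
  then show ?thesis
    using assms by (simp add: lookup_x_gen flip: of_nat_mult of_nat_add)
qed

lemma gens_in_exps [simp]: "yz_gen i \<in> exps (n + 2)" "x_gen i \<in> exps (n + 2)"
  by (simp_all add: yz_gen_def x_gen_def)

lemma keys_gens_disjoint: "keys (yz_gen i) \<inter> keys (x_gen i') = {}"
  by (auto simp: in_keys_iff lookup_yz_gen lookup_x_gen split: if_splits)

lemma deg_vec_gen: "deg_vec (n + 2) n A (yz_gen i) = deg_vec (n + 2) n A (x_gen i)"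
  unfolding deg_vec_eq_iff
proof (intro allI impI)
  fix k assume k: "k < n"
  show "cfg_deg (n + 2) A (yz_gen i) k = cfg_deg (n + 2) A (x_gen i) k"
    unfolding cfg_deg_A[OF k] d_mult_x_gen[OF k] using k by (simp add: lookup_yz_gen lookup_x_gen)
qed

lemma in_lattice_yz_diff:
  assumes "deg_vec (n + 2) n A U = deg_vec (n + 2) n A V"
  shows "in_lattice (int (lookup U n) - int (lookup V n)) (int (lookup U (Suc n)) - int (lookup V (Suc n)))"
  unfolding in_lattice_def
proof (intro allI impI)
  fix j assume "j < n"
  from deg_vec_A_diff[OF assms this] show "int (d j) dvd (int (lookup U n) - int (lookup V n)) * int (a1 j)
      + (int (lookup U (Suc n)) - int (lookup V (Suc n))) * int (a2 j)"
    by (metis add.inverse_inverse dvd_minus_iff dvd_triv_left)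
qed

text \<open>Since all \<open>d\<^sub>j > 0\<close>, the difference of two exponent vectors of equal \<open>A\<close>-degree is
  determined by its \<open>y\<close>- and \<open>z\<close>-coordinates.\<close>

lemma diff_eq_gen_combination:
  assumes deg: "deg_vec (n + 2) n A U = deg_vec (n + 2) n A V"
    and U: "U \<in> exps (n + 2)" and V: "V \<in> exps (n + 2)"
    and y: "int (lookup U n) - int (lookup V n) = (\<Sum>i\<in>I. k i * int (gp i))"
    and z: "int (lookup U (Suc n)) - int (lookup V (Suc n)) = (\<Sum>i\<in>I. k i * int (gq i))"
  shows "int (lookup U l)
    = int (lookup V l) + (\<Sum>i\<in>I. k i * (int (lookup (yz_gen i) l) - int (lookup (x_gen i) l)))"
proof -
  consider "l < n" | "l = n" | "l = Suc n" | "n + 2 \<le> l"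
    by linarith
  then show ?thesis
  proof cases
    case 1
    have "int (d l) * (int (lookup U l) - int (lookup V l))
        = - (\<Sum>i\<in>I. k i * (int (gp i) * int (a1 l) + int (gq i) * int (a2 l)))"
      unfolding deg_vec_A_diff[OF deg 1] y z by (simp add: sum_distrib_left sum_distrib_right sum.distrib algebra_simps)
    also have "\<dots> = int (d l) * (\<Sum>i\<in>I. k i * (int (lookup (yz_gen i) l) - int (lookup (x_gen i) l)))"
      using 1 by (simp add: d_mult_x_gen lookup_yz_gen sum_distrib_left algebra_simps flip: sum_negf)
    finally have "int (lookup U l) - int (lookup V l)
        = (\<Sum>i\<in>I. k i * (int (lookup (yz_gen i) l) - int (lookup (x_gen i) l)))"
      using d_pos 1 by auto
    then show ?thesis
      by simp
  next
    case 2
    then show ?thesis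
      using y by (simp add: lookup_yz_gen lookup_x_gen)
  next
    case 3
    then show ?thesis
      using z by (simp add: lookup_yz_gen lookup_x_gen)
  next
    case 4
    then show ?thesis
      using U V by (simp add: exps_iff_lookup lookup_yz_gen lookup_x_gen)
  qed
qed


text \<open>\<open>U\<close> is rich if every \<open>x\<^sub>j\<close> occurring in \<open>g\<^sub>1\<close> or \<open>g\<^sub>2\<close> divides \<open>x\<^sup>U\<close> or can be obtained from a
  \<open>y\<close> or \<open>z\<close> of \<open>x\<^sup>U\<close> by \<open>g\<^sub>1\<close> or \<open>g\<^sub>2\<close>.\<close>

definition rich :: "(nat \<Rightarrow>\<^sub>0 nat) \<Rightarrow> bool" where
  "rich U \<longleftrightarrow> (\<forall>j<n. 0 < a1 j \<or> 0 < a2 j \<longrightarrow>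
     0 < lookup U j \<or> (0 < lookup U n \<and> 0 < a1 j) \<or> (0 < lookup U (Suc n) \<and> 0 < a2 j))"

lemma x_gen_pos_iff:
  assumes "j < n"
  shows "0 < lookup (x_gen 0) j \<longleftrightarrow> 0 < a1 j" and "0 < lookup (x_gen 1) j \<longleftrightarrow> 0 < a2 j"
proof -
  have "d j * lookup (x_gen 0) j = p0 * a1 j" "d j * lookup (x_gen 1) j = q0 * a2 j"
    using d_mult_x_gen[OF assms, of 0] d_mult_x_gen[OF assms, of 1]
    by (simp_all add: gp_def gq_def flip: of_nat_mult)
  moreover have "0 < d j"
    using d_pos assms by simp
  ultimately show "0 < lookup (x_gen 0) j \<longleftrightarrow> 0 < a1 j" "0 < lookup (x_gen 1) j \<longleftrightarrow> 0 < a2 j"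
    using p0(1) q0(1) by (metis nat_0_less_mult_iff)+
qed

definition x_size :: nat where
  "x_size = (\<Sum>j<n. lookup (x_gen 0) j + lookup (x_gen 1) j)"

text \<open>For \<open>K = p\<^sub>0 q\<^sub>0 t S\<close>, trading all \<open>y\<close>'s and \<open>z\<close>'s of \<open>x\<^bsup>KU\<^esup>\<close> for \<open>x\<close>'s by \<open>g\<^sub>1, g\<^sub>2\<close>
  yields a multiple of \<open>x\<^bsup>t(a + b)\<^esup>\<close>.\<close>

lemma rich_x_content:
  assumes "rich U" and j: "j < n"
  defines "a \<equiv> lookup (x_gen 0)" and "b \<equiv> lookup (x_gen 1)" and "S \<equiv> x_size"
  shows "t * (a j + b j) \<le> p0 * q0 * t * S * lookup U j + q0 * t * S * lookup U n * a j
      + p0 * t * S * lookup U (Suc n) * b j"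
proof (cases "a j + b j = 0")
  case False
  have tS: "t * (a j + b j) \<le> t * S"
    unfolding S_def x_size_def a_def b_def using j by (intro mult_le_mono2 member_le_sum) auto
  have "0 < a j \<or> 0 < b j"
    using False by simp
  then have "0 < a1 j \<or> 0 < a2 j"
    using x_gen_pos_iff[OF j] unfolding a_def b_def by simp
  then have "0 < lookup U j \<or> (0 < lookup U n \<and> 0 < a1 j) \<or> (0 < lookup U (Suc n) \<and> 0 < a2 j)"
    using \<open>rich U\<close> j unfolding rich_def by blast
  then consider "0 < lookup U j" | "0 < lookup U n" "0 < a j" | "0 < lookup U (Suc n)" "0 < b j"
    using x_gen_pos_iff[OF j] unfolding a_def b_def by auto
  then show ?thesis
  proof cases
    case 1
    have "t * S \<le> p0 * q0 * t * S * lookup U j"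
      using 1 p0(1) q0(1) by simp
    then show ?thesis using tS by linarith
  next
    case 2
    have "t * S \<le> q0 * t * S * lookup U n * a j"
      using 2 q0(1) by simp
    then show ?thesis using tS by linarith
  next
    case 3
    have "t * S \<le> p0 * t * S * lookup U (Suc n) * b j"
      using 3 p0(1) by simp
    then show ?thesis using tS by linarith
  qed
qed simp

end

locale simplicial_cfg_moves = simplicial_cfg +
  fixes J :: "'k::field mpoly set"
  assumes J: "is_ideal (n + 2) J"
    and gens: "\<And>i. i < 3 \<Longrightarrow> linked J (yz_gen i) (x_gen i)"
begin

lemma linked_by_gen:
  assumes "i < 3" and "V \<in> exps (n + 2)"
    and "\<And>l. int (lookup U l) = int (lookup V l) + k * (int (lookup (yz_gen i) l) - int (lookup (x_gen i) l))"
  shows "linked J V U"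
  by (rule linked_by_move[OF J gens[OF assms(1)]]) (fact gens_in_exps keys_gens_disjoint assms)+

lemma linked_if_no_y:
  assumes deg: "deg_vec (n + 2) n A U = deg_vec (n + 2) n A V"
    and U: "U \<in> exps (n + 2)" and V: "V \<in> exps (n + 2)"
    and "lookup U n = 0" and "lookup V n = 0"
  shows "linked J V U"
proof -
  have "in_lattice 0 (int (lookup U (Suc n)) - int (lookup V (Suc n)))"
    using in_lattice_yz_diff[OF deg] assms by simp
  then obtain k where "int (lookup U (Suc n)) - int (lookup V (Suc n)) = int q0 * k"
    using q0_dvd by (blast elim: dvdE)
  then have move: "int (lookup U l) = int (lookup V l) + k * (int (lookup (yz_gen 1) l) - int (lookup (x_gen 1) l))" for l
    using diff_eq_gen_combination[OF deg U V, where I = "{1}" and k = "\<lambda>_. k" and l = l] assms by (simp add: gp_def gq_def)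
  show ?thesis
    by (rule linked_by_gen[OF _ V move]) simp
qed

lemma linked_if_no_z:
  assumes deg: "deg_vec (n + 2) n A U = deg_vec (n + 2) n A V"
    and U: "U \<in> exps (n + 2)" and V: "V \<in> exps (n + 2)"
    and "lookup U (Suc n) = 0" and "lookup V (Suc n) = 0"
  shows "linked J V U"
proof -
  have "in_lattice (int (lookup U n) - int (lookup V n)) 0"
    using in_lattice_yz_diff[OF deg] assms by simp
  then obtain k where "int (lookup U n) - int (lookup V n) = int p0 * k"
    using p0_dvd by (blast elim: dvdE)
  then have move: "int (lookup U l) = int (lookup V l) + k * (int (lookup (yz_gen 0) l) - int (lookup (x_gen 0) l))" for l
    using diff_eq_gen_combination[OF deg U V, where I = "{0}" and k = "\<lambda>_. k" and l = l] assms by (simp add: gp_def gq_def)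
  show ?thesis
    by (rule linked_by_gen[OF _ V move]) simp
qed

text \<open>If \<open>U\<close> is not rich, some row of \<open>A\<close> gives \<open>U\<close> degree \<open>0\<close>, hence also \<open>V\<close>, and this row
  rules out \<open>y\<close> or \<open>z\<close> in both monomials.\<close>

lemma linked_if_not_rich:
  assumes "\<not> rich U" and deg: "deg_vec (n + 2) n A U = deg_vec (n + 2) n A V"
    and U: "U \<in> exps (n + 2)" and V: "V \<in> exps (n + 2)"
  shows "linked J V U"
proof -
  obtain j where j: "j < n" "0 < a1 j \<or> 0 < a2 j" "\<not> 0 < lookup U j"
    and no_y: "\<not> (0 < lookup U n \<and> 0 < a1 j)" and no_z: "\<not> (0 < lookup U (Suc n) \<and> 0 < a2 j)"
    using assms(1) unfolding rich_def by auto
  have "cfg_deg (n + 2) A V j = cfg_deg (n + 2) A U j"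
    using deg j(1) unfolding deg_vec_eq_iff by (simp only:)
  also have "\<dots> = 0"
    unfolding cfg_deg_A[OF j(1)] using j no_y no_z by auto
  finally have "a1 j * lookup V n = 0" "a2 j * lookup V (Suc n) = 0"
    unfolding cfg_deg_A[OF j(1)] by (simp_all add: add_nonneg_eq_0_iff flip: of_nat_mult)
  then show ?thesis
    using j(2) no_y no_z linked_if_no_y[OF deg U V] linked_if_no_z[OF deg U V] by auto
qed


lemma rich_scale_linked:
  assumes "rich U" and U: "U \<in> exps (n + 2)"
  obtains K M where "M \<in> exps (n + 2)" and "linked J (scale_exp K U) M"
    and "t \<le> lookup M n" and "t \<le> lookup M (Suc n)"
proof -
  let ?a = "lookup (x_gen 0)" and ?b = "lookup (x_gen 1)"
  define K where "K = p0 * q0 * t * x_size"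
  define cA where "cA = q0 * t * x_size * lookup U n"
  define cB where "cB = p0 * t * x_size * lookup U (Suc n)"
  \<comment> \<open>\<open>x\<^sup>M\<close>: trade all \<open>y\<close>'s and \<open>z\<close>'s of \<open>x\<^bsup>KU\<^esup>\<close> for \<open>x\<close>'s, then trade \<open>x\<^bsup>t(a + b)\<^esup>\<close> back\<close>
  define M where "M = vec (n + 2) (\<lambda>l. if l < n then K * lookup U l + cA * ?a l + cB * ?b l - t * (?a l + ?b l)
    else if l = n then t * p0 else if l = Suc n then t * q0 else 0)"
  define k where "k i = (if i = 0 then int t - int cA else int t - int cB)" for i :: nat
  have content: "t * (?a j + ?b j) \<le> K * lookup U j + cA * ?a j + cB * ?b j" if "j < n" for j
    using rich_x_content[OF assms(1) that, of t] unfolding K_def cA_def cB_def .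
  have KU: "K * lookup U n = cA * p0" "K * lookup U (Suc n) = cB * q0"
    unfolding K_def cA_def cB_def by simp_all
  have move: "int (lookup M l) = int (lookup (scale_exp K U) l)
      + (\<Sum>i\<in>{0, 1}. k i * (int (lookup (yz_gen i) l) - int (lookup (x_gen i) l)))" for l
  proof -
    consider "l < n" | "l = n \<or> l = Suc n" | "n + 2 \<le> l"
      by linarith
    then show ?thesis
    proof cases
      case 1
      then show ?thesis
        using content[OF 1] by (simp add: M_def lookup_vec lookup_yz_gen k_def of_nat_diff algebra_simps)
    next
      case 2
      then show ?thesis
        using KU by (auto simp: M_def lookup_vec lookup_yz_gen lookup_x_gen k_def gp_def gq_def algebra_simps
            simp flip: of_nat_mult)
    next
      case 3
      then show ?thesis
        using U by (simp add: M_def lookup_vec lookup_yz_gen lookup_x_gen exps_iff_lookup)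
    qed
  qed
  have enough: "(\<Sum>i\<in>{0, 1}. nat (- k i) * lookup (yz_gen i) l) \<le> lookup (scale_exp K U) l" for l
    using KU by (auto simp: lookup_yz_gen k_def gp_def gq_def nat_diff_distrib' simp flip: nat_minus_as_int)
  have "M \<in> exps (n + 2)"
    by (simp add: M_def)
  moreover have "linked J (scale_exp K U) M"
    by (rule linked_by_moves[OF J, where I = "{0, 1}" and P = yz_gen and Q = x_gen and k = k])
      (use gens keys_gens_disjoint U move enough in auto)
  moreover have "t \<le> lookup M n" "t \<le> lookup M (Suc n)"
    using p0(1) q0(1) by (simp_all add: M_def lookup_vec)
  ultimately show thesis
    by (rule that)
qed

text \<open>Given enough \<open>y\<close>'s and \<open>z\<close>'s, \<open>V\<close> can be moved to \<open>U\<close> along the lattice basis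
  \<open>(p\<^sub>0, 0)\<close>, \<open>(p\<^sub>1, q\<^sub>1)\<close>.\<close>

lemma linked_if_enough_yz:
  assumes deg: "deg_vec (n + 2) n A U = deg_vec (n + 2) n A V"
    and U: "U \<in> exps (n + 2)" and V: "V \<in> exps (n + 2)"
  shows "\<exists>t. \<forall>M \<in> exps (n + 2). t \<le> lookup M n \<longrightarrow> t \<le> lookup M (Suc n) \<longrightarrow>
    linked J (M + V) (M + U)"
proof -
  obtain k0 k2 where k: "int (lookup U n) - int (lookup V n) = k0 * int p0 + k2 * int p1"
    "int (lookup U (Suc n)) - int (lookup V (Suc n)) = k2 * int q1"
    using in_lattice_cases[OF in_lattice_yz_diff[OF deg]] .
  define k where "k i = (if i = 0 then k0 else k2)" for i :: nat
  have move: "int (lookup U l)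
      = int (lookup V l) + (\<Sum>i\<in>{0, 2}. k i * (int (lookup (yz_gen i) l) - int (lookup (x_gen i) l)))" for l
    by (rule diff_eq_gen_combination[OF deg U V]) (use k in \<open>simp_all add: k_def gp_def gq_def\<close>)
  show ?thesis
  proof (intro exI ballI impI)
    fix M assume M: "M \<in> exps (n + 2)" "nat \<bar>k0\<bar> * p0 + nat \<bar>k2\<bar> * (p1 + q1) \<le> lookup M n"
      "nat \<bar>k0\<bar> * p0 + nat \<bar>k2\<bar> * (p1 + q1) \<le> lookup M (Suc n)"
    have enough: "(\<Sum>i\<in>{0, 2}. nat (- k i) * lookup (yz_gen i) l) \<le> lookup (M + V) l" for l
    proof -
      have "nat (- k0) * p0 \<le> nat \<bar>k0\<bar> * p0" "nat (- k2) * p1 \<le> nat \<bar>k2\<bar> * p1"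
        "nat (- k2) * q1 \<le> nat \<bar>k2\<bar> * q1"
        by (intro mult_le_mono1; simp)+
      then have "nat (- k0) * p0 + nat (- k2) * p1 \<le> nat \<bar>k0\<bar> * p0 + nat \<bar>k2\<bar> * (p1 + q1)"
        "nat (- k2) * q1 \<le> nat \<bar>k0\<bar> * p0 + nat \<bar>k2\<bar> * (p1 + q1)"
        unfolding add_mult_distrib2 by linarith+
      then show ?thesis
        using M by (auto simp: lookup_add lookup_yz_gen k_def gp_def gq_def)
    qed
    show "linked J (M + V) (M + U)"
      by (rule linked_by_moves[OF J, where I = "{0, 2}" and P = yz_gen and Q = x_gen and k = k])
        (use gens keys_gens_disjoint M V move enough in \<open>auto simp: lookup_add\<close>)
  qed
qed

lemma linked_after_scaling:
  assumes deg: "deg_vec (n + 2) n A U = deg_vec (n + 2) n A V"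
    and U: "U \<in> exps (n + 2)" and V: "V \<in> exps (n + 2)"
  obtains K where "linked J (scale_exp K U + V) (scale_exp K U + U)"
proof (cases "rich U")
  case True
  from linked_if_enough_yz[OF deg U V] obtain t where enough: "\<forall>M \<in> exps (n + 2).
      t \<le> lookup M n \<longrightarrow> t \<le> lookup M (Suc n) \<longrightarrow> linked J (M + V) (M + U)" ..
  obtain K M where M: "M \<in> exps (n + 2)" "linked J (scale_exp K U) M" "t \<le> lookup M n" "t \<le> lookup M (Suc n)"
    using rich_scale_linked[OF True U] .
  have to_M: "linked J (scale_exp K U + V) (M + V)"
    using linked_add[OF J M(2) linked_refl[OF J]] U V by simp
  have within_M: "linked J (M + V) (M + U)"
    using enough M by simp
  have from_M: "linked J (M + U) (scale_exp K U + U)"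
    using linked_sym[OF J linked_add[OF J M(2) linked_refl[OF J]]] U by simp
  show thesis
    by (rule that, rule linked_trans[OF J to_M linked_trans[OF J within_M from_M]])
next
  case False
  then have "linked J V U"
    by (rule linked_if_not_rich[OF _ deg U V])
  then show thesis
    by (intro that[of 0]) simp
qed

lemma binom_mem_radical:
  assumes deg: "deg_vec (n + 2) n A U = deg_vec (n + 2) n A V"
    and U: "U \<in> exps (n + 2)" and V: "V \<in> exps (n + 2)"
  shows "binom U V \<in> radical (n + 2) J"
proof -
  obtain K where "linked J (scale_exp K U + V) (scale_exp K U + U)"
    using linked_after_scaling[OF deg U V] .
  moreover obtain K' where "linked J (scale_exp K' V + U) (scale_exp K' V + V)"
    using linked_after_scaling[OF deg[symmetric] V U] .
  ultimately show ?thesis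
    by (rule binom_mem_radical_if_linked[OF J U V])
qed

end

context simplicial_cfg
begin

text \<open>\<open>ext_cfg i\<close> appends to \<open>A\<close> the row \<open>(0, \<dots>, 0, gq i, - gp i)\<close>, which vanishes on the
  lattice point \<open>(gp i, gq i)\<close>; its toric ideal still contains the \<open>i\<close>-th generator.\<close>

definition ext_cfg :: "nat \<Rightarrow> nat \<Rightarrow> nat \<Rightarrow> int" where
  "ext_cfg i = (\<lambda>j k. if k < n then A j k
     else if j = n then int (gq i) else if j = Suc n then - int (gp i) else 0)"

lemma cfg_deg_ext_cfg_last:
  "cfg_deg (n + 2) (ext_cfg i) u n = int (gq i) * int (lookup u n) - int (gp i) * int (lookup u (Suc n))"
proof -
  have "(\<Sum>j<n. int (lookup u j) * ext_cfg i j n) = 0"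
    by (rule sum.neutral) (simp add: ext_cfg_def)
  then show ?thesis
    by (simp add: cfg_deg_def numeral_2_eq_2 ext_cfg_def)
qed

lemma deg_vec_ext_cfg_eq_iff:
  "deg_vec (n + 2) (Suc n) (ext_cfg i) u = deg_vec (n + 2) (Suc n) (ext_cfg i) v \<longleftrightarrow>
    deg_vec (n + 2) n A u = deg_vec (n + 2) n A v
    \<and> int (gq i) * int (lookup u n) - int (gp i) * int (lookup u (Suc n))
      = int (gq i) * int (lookup v n) - int (gp i) * int (lookup v (Suc n))"
proof -
  have "cfg_deg (n + 2) (ext_cfg i) w k = cfg_deg (n + 2) A w k" if "k < n" for w k
    using that by (simp add: cfg_deg_def ext_cfg_def)
  then show ?thesis
    unfolding deg_vec_eq_iff cfg_deg_ext_cfg_last[symmetric] by (auto simp: less_Suc_eq)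
qed

lemma pointed_ext_cfg: "pointed_cfg (n + 2) (Suc n) (ext_cfg i)"
  unfolding pointed_cfg_def
proof (intro allI impI)
  fix v :: "nat \<Rightarrow> nat" and j
  assume rows: "\<forall>k<Suc n. (\<Sum>j<n + 2. int (v j) * ext_cfg i j k) = 0" and "j < n + 2"
  have "\<forall>k<n. (\<Sum>j<n + 2. int (v j) * A j k) = 0"
  proof (intro allI impI)
    fix k assume "k < n"
    then show "(\<Sum>j<n + 2. int (v j) * A j k) = 0"
      using rows[rule_format, of k] by (simp add: ext_cfg_def)
  qed
  with pointed_A \<open>j < n + 2\<close> show "v j = 0"
    unfolding pointed_cfg_def by simp
qed

lemma toric_ext_cfg_subset: "toric_ideal (n + 2) (Suc n) (ext_cfg i) \<subseteq> toric_ideal (n + 2) n A"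
  by (rule toric_ideal_mono) (simp add: deg_vec_ext_cfg_eq_iff)

lemma gen_mem_toric_ext_cfg: "binom (yz_gen i) (x_gen i) \<in> toric_ideal (n + 2) (Suc n) (ext_cfg i)"
  by (simp add: binom_mem_toric_ideal_iff deg_vec_ext_cfg_eq_iff deg_vec_gen lookup_yz_gen lookup_x_gen)

lemma gen_not_mem_toric_ext_cfg:
  assumes "int (gq i) * int (gp i') \<noteq> int (gp i) * int (gq i')"
  shows "binom (yz_gen i') (x_gen i') \<notin> toric_ideal (n + 2) (Suc n) (ext_cfg i)"
  using assms by (simp add: binom_mem_toric_ideal_iff deg_vec_ext_cfg_eq_iff lookup_yz_gen lookup_x_gen)

lemma toric_ext_cfg_ne:
  assumes "i < 3"
  shows "toric_ideal (n + 2) (Suc n) (ext_cfg i) \<noteq> toric_ideal (n + 2) n A"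
proof -
  obtain i' where "int (gq i) * int (gp i') \<noteq> int (gp i) * int (gq i')"
  proof (cases "i = 0")
    case True
    then show thesis
      using that[of 2] p0(1) q1(1) by (simp add: gp_def gq_def)
  next
    case False
    then show thesis
      using that[of 0] assms p0(1) q0(1) q1(1) by (simp add: gp_def gq_def)
  qed
  moreover have "binom (yz_gen i') (x_gen i') \<in> toric_ideal (n + 2) n A"
    by (simp add: binom_mem_toric_ideal_iff deg_vec_gen)
  ultimately show ?thesis
    using gen_not_mem_toric_ext_cfg by blast
qed

lemma toric_ideal_A_eq_radical:
  "toric_ideal (n + 2) n A
    = radical (n + 2) (ideal_sum 3 (\<lambda>i. toric_ideal (n + 2) (Suc n) (ext_cfg i)) :: 'k::field mpoly set)"
    (is "_ = radical _ ?J")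
proof
  have J: "is_ideal (n + 2) ?J"
    by (intro ideal_sum_is_ideal toric_ideal_is_ideal)
  have "linked ?J (yz_gen i) (x_gen i)" if "i < 3" for i
    unfolding linked_def
    by (rule ideal_sum_member[where I = "\<lambda>i. toric_ideal (n + 2) (Suc n) (ext_cfg i)",
          OF toric_ideal_is_ideal that]) (simp add: gen_mem_toric_ext_cfg)
  then interpret simplicial_cfg_moves n d a1 a2 ?J
    using J by unfold_locales
  show "toric_ideal (n + 2) n A \<subseteq> radical (n + 2) ?J"
    by (rule toric_ideal_subset_of_binoms[OF radical_is_ideal[OF J] binom_mem_radical])
  have "?J \<subseteq> toric_ideal (n + 2) n A"
    by (rule ideal_sum_subset[OF toric_ideal_is_ideal toric_ext_cfg_subset])
  then show "radical (n + 2) ?J \<subseteq> toric_ideal (n + 2) n A"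
    using radical_mono radical_toric_ideal by blast
qed

lemma rad_splittable_3: "rad_splittable TYPE('k::field) (n + 2) n A 3"
  unfolding rad_splittable_def
proof (intro exI conjI allI impI)
  show "pointed_cfg (n + 2) ((\<lambda>_. Suc n) i) (ext_cfg i)" for i
    by (simp add: pointed_ext_cfg)
  show "(toric_ideal (n + 2) ((\<lambda>_. Suc n) i) (ext_cfg i) :: 'k mpoly set) \<noteq> toric_ideal (n + 2) n A"
    if "i < 3" for i
    using toric_ext_cfg_ne[OF that] by simp
  show "(toric_ideal (n + 2) n A :: 'k mpoly set)
      = radical (n + 2) (ideal_sum 3 (\<lambda>i. toric_ideal (n + 2) ((\<lambda>_. Suc n) i) (ext_cfg i)))"
    by (simp add: toric_ideal_A_eq_radical)
qed

lemma toric_ideal_A_nonzero: "(toric_ideal (n + 2) n A :: 'k::field mpoly set) \<noteq> {0}"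
proof -
  have "lookup (yz_gen 0) n \<noteq> lookup (x_gen 0) n"
    using p0(1) by (simp add: lookup_yz_gen lookup_x_gen gp_def)
  then have "yz_gen 0 \<noteq> x_gen 0"
    by auto
  then have "(binom (yz_gen 0) (x_gen 0) :: 'k mpoly) \<noteq> 0"
    by (rule binom_nonzero)
  moreover have "(binom (yz_gen 0) (x_gen 0) :: 'k mpoly) \<in> toric_ideal (n + 2) n A"
    by (simp add: binom_mem_toric_ideal_iff deg_vec_gen)
  ultimately show ?thesis
    by blast
qed

end

theorem corollary4p4:
  fixes n :: nat and d a1 a2 :: "nat \<Rightarrow> nat"
  assumes "\<forall>j<n. d j > 0"
    and "\<exists>j<n. a1 j \<noteq> 0"
    and "\<exists>j<n. a2 j \<noteq> 0"
  shows "2 \<le> split_rad TYPE('k::field) (n + 2) n (cor_cfg n d a1 a2)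
         \<and> split_rad TYPE('k::field) (n + 2) n (cor_cfg n d a1 a2) \<le> 3"
proof -
  interpret simplicial_cfg n d a1 a2
    using assms by unfold_locales
  show ?thesis
    using split_rad_bounds[OF toric_ideal_A_nonzero rad_splittable_3] .
qed

end
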